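(* Let $n\ge 5$ and $k\ge 1$, and let $\mathcal{G}^4_n$ be the graph on $\{1,\dots,n\}$ in which each node $i$ is adjacent to $i\pm1$ and $i\pm 2 \pmod n$. Then $$M^{\mathcal{G}^4_n}_{k,n}\le M^C_{k,\lfloor n/2\rfloor}+M^C_{k,\lceil n/2\rceil}+2 .$$ In particular, $M^{\mathcal{G}^4_n}_{k,n}=O(2k\log(n/(2k)))+2$.
   Context: Let $G=(V,E)$ be a simple undirected graph with $V=\{1,\dots,n\}$. A measurement matrix for $G$ is a matrix $A\in\{0,1\}^{m\times n}$ in which every nonzero row has a support that induces a connected subgraph of $G$. A vector $x\in\mathbb{R}^n$ is $k$-sparse if it has at most $k$ nonzero entries. $A$ identifies all $k$-sparse vectors if $Ax_1\ne Ax_2$ for every two distinct $k$-sparse vectors $x_1,x_2$. $M^G_{k,n}$ is the minimum number of rows of a measurement matrix for $G$ that identifies all $k$-sparse vectors. $M^C_{k,N}$ is the minimum number of rows of an arbitrary matrix in $\{0,1\}^{m\times N}$ that identifies all $k$-sparse vectors in $\mathbb{R}^N$; equivalently, it is $M^{K_N}_{k,N}$ for the complete graph $K_N$. It is known that $M^C_{k,N}=O(k\log(N/k))$. *)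

theory Defs
  imports Complex_Main
begin

text \<open>Graphs on vertex set {1..n} are given by an edge predicate E.
  A matrix with m rows and n columns is a function A :: nat => nat => real,
  with row indices i < m and column indices j in {1..n}.
  Vectors in R^n are functions x :: nat => real, vanishing outside {1..n}.\<close>

definition zero_one_matrix :: "nat \<Rightarrow> nat \<Rightarrow> (nat \<Rightarrow> nat \<Rightarrow> real) \<Rightarrow> bool" where
  "zero_one_matrix m n A \<longleftrightarrow> (\<forall>i<m. \<forall>j\<in>{1..n}. A i j = 0 \<or> A i j = 1)"

definition row_support :: "nat \<Rightarrow> (nat \<Rightarrow> nat \<Rightarrow> real) \<Rightarrow> nat \<Rightarrow> nat set" where
  "row_support n A i = {j \<in> {1..n}. A i j \<noteq> 0}"

definition induces_connected :: "(nat \<Rightarrow> nat \<Rightarrow> bool) \<Rightarrow> nat set \<Rightarrow> bool" where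
  "induces_connected E S \<longleftrightarrow>
     (\<forall>u\<in>S. \<forall>v\<in>S. (\<lambda>a b. a \<in> S \<and> b \<in> S \<and> E a b)\<^sup>*\<^sup>* u v)"

definition measurement_matrix ::
  "(nat \<Rightarrow> nat \<Rightarrow> bool) \<Rightarrow> nat \<Rightarrow> nat \<Rightarrow> (nat \<Rightarrow> nat \<Rightarrow> real) \<Rightarrow> bool" where
  "measurement_matrix E m n A \<longleftrightarrow> zero_one_matrix m n A \<and>
     (\<forall>i<m. row_support n A i \<noteq> {} \<longrightarrow> induces_connected E (row_support n A i))"

definition sparse_vec :: "nat \<Rightarrow> nat \<Rightarrow> (nat \<Rightarrow> real) \<Rightarrow> bool" where
  "sparse_vec k n x \<longleftrightarrow> (\<forall>j. j \<notin> {1..n} \<longrightarrow> x j = 0) \<and> card {j\<in>{1..n}. x j \<noteq> 0} \<le> k"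

definition mat_vec :: "nat \<Rightarrow> (nat \<Rightarrow> nat \<Rightarrow> real) \<Rightarrow> (nat \<Rightarrow> real) \<Rightarrow> nat \<Rightarrow> real" where
  "mat_vec n A x i = (\<Sum>j=1..n. A i j * x j)"

definition identifies :: "nat \<Rightarrow> nat \<Rightarrow> nat \<Rightarrow> (nat \<Rightarrow> nat \<Rightarrow> real) \<Rightarrow> bool" where
  "identifies k m n A \<longleftrightarrow>
     (\<forall>x1 x2. sparse_vec k n x1 \<longrightarrow> sparse_vec k n x2 \<longrightarrow> x1 \<noteq> x2 \<longrightarrow>
        (\<exists>i<m. mat_vec n A x1 i \<noteq> mat_vec n A x2 i))"

definition M_graph :: "(nat \<Rightarrow> nat \<Rightarrow> bool) \<Rightarrow> nat \<Rightarrow> nat \<Rightarrow> nat" where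
  "M_graph E k n = (LEAST m. \<exists>A. measurement_matrix E m n A \<and> identifies k m n A)"

text \<open>M^C_{k,N}: arbitrary 0/1 matrices (equivalently, the complete graph).\<close>
definition M_C :: "nat \<Rightarrow> nat \<Rightarrow> nat" where
  "M_C k N = (LEAST m. \<exists>A. zero_one_matrix m N A \<and> identifies k m N A)"

definition G4 :: "nat \<Rightarrow> nat \<Rightarrow> nat \<Rightarrow> bool" where
  "G4 n i j \<longleftrightarrow> i \<in> {1..n} \<and> j \<in> {1..n} \<and> i \<noteq> j \<and>
     (int i - int j) mod int n \<in> {1, 2, int n - 1, int n - 2}"

end

theory Submission
  imports Defs
begin

(* Take optimal unconstrained 0/1 matrices B1 (on the ceil(n/2) odd vertices) and
   B2 (on the floor(n/2) even vertices).  Build the "interleaved" matrix whose rows are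
     - a row of B1 on the odd columns, padded with 1 on every even column,
     - a row of B2 on the even columns, padded with 1 on every odd column,
     - the indicator of the even columns, and the indicator of the odd columns.
   Every row contains a whole parity class, and in G4_n any vertex set containing a whole
   parity class is connected (steps +-2 link a parity class, steps +-1 attach the other
   vertices), so this is a measurement matrix.  The last two rows reveal the sums of the
   even and of the odd entries of x; subtracting them from the padded rows recovers the
   products B1 * x_odd and B2 * x_even, which determine x_odd and x_even since restrictions
   of k-sparse vectors are k-sparse. *)

(* G4_n is an undirected graph: the residues +-1, +-2 mod n are closed under negation. *)
lemma G4_symmetric:
  assumes "n \<ge> 5" and "G4 n a c"
  shows "G4 n c a"
proof -
  define r where "r = (int a - int c) mod int n"
  have r: "r \<in> {1, 2, int n - 1, int n - 2}" using assms(2) unfolding G4_def r_def by auto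
  have "(int c - int a) mod int n = (- r) mod int n"
    unfolding r_def by (metis minus_diff_eq mod_minus_eq)
  also have "\<dots> = int n - r"
  proof -
    have "0 < r" "r < int n" using r assms(1) by auto
    then show ?thesis by (simp add: zmod_zminus1_eq_if)
  qed
  finally have "(int c - int a) mod int n \<in> {1, 2, int n - 1, int n - 2}" using r by auto
  with assms(2) show ?thesis by (auto simp: G4_def)
qed

lemma G4_step:
  assumes "n \<ge> 5" and "d \<in> {1, 2}" and "1 \<le> a" and "a + d \<le> n"
  shows "G4 n (a + d) a" and "G4 n a (a + d)"
proof -
  have "(int (a + d) - int a) mod int n = int d" using assms by auto
  then show "G4 n (a + d) a" using assms unfolding G4_def by auto
  then show "G4 n a (a + d)" using G4_symmetric assms(1) by blast
qed

lemma induces_connected_from_root: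
  assumes sym: "\<And>a b. E a b \<Longrightarrow> E b a"
    and root: "\<And>v. v \<in> S \<Longrightarrow> (\<lambda>a b. a \<in> S \<and> b \<in> S \<and> E a b)\<^sup>*\<^sup>* r v"
  shows "induces_connected E S"
  unfolding induces_connected_def
proof (intro ballI)
  let ?R = "\<lambda>a b. a \<in> S \<and> b \<in> S \<and> E a b"
  fix u v assume "u \<in> S" "v \<in> S"
  have "symp ?R\<^sup>*\<^sup>*" by (rule symp_rtranclp) (use sym in \<open>auto intro: sympI\<close>)
  then have "?R\<^sup>*\<^sup>* u r" using root[OF \<open>u \<in> S\<close>] by (blast dest: sympD)
  then show "?R\<^sup>*\<^sup>* u v" using root[OF \<open>v \<in> S\<close>] by (rule rtranclp_trans)
qed

(* If S contains every vertex of the parity of b (b = 1 or 2), then every vertex of S is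
   reachable from b inside S: by induction, w is reached from w - 2 (same parity) or from
   w - 1 (other parity); the only vertex below b is 1, a neighbour of 2. *)
lemma G4_parity_class_reaches:
  fixes b :: nat
  assumes n5: "n \<ge> 5" and b: "b \<in> {1, 2}" and sub: "S \<subseteq> {1..n}"
    and parity: "\<And>j. j \<in> {1..n} \<Longrightarrow> even j = even b \<Longrightarrow> j \<in> S"
    and v: "v \<in> S"
  shows "(\<lambda>a c. a \<in> S \<and> c \<in> S \<and> G4 n a c)\<^sup>*\<^sup>* b v"
proof -
  let ?R = "\<lambda>a c. a \<in> S \<and> c \<in> S \<and> G4 n a c"
  have b_in: "b \<in> S" using b n5 by (intro parity) auto
  have step: "?R (w - d) w" if "w \<in> S" "d \<in> {1, 2}" "b \<le> w - d" "w - d \<in> S" for w d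
    using G4_step(2)[OF n5 \<open>d \<in> {1, 2}\<close>, of "w - d"] that b sub by auto
  have above: "?R\<^sup>*\<^sup>* b w" if "w \<in> S" "b \<le> w" for w
    using that
  proof (induction w rule: less_induct)
    case (less w)
    show ?case
    proof (cases "w = b")
      case False
      define d :: nat where "d = (if even w = even b then 2 else 1)"
      have d: "d \<in> {1, 2}" "b \<le> w - d" "even (w - d) = even b"
      proof -
        have "b < w" using False less.prems(2) by simp
        moreover have "b + 2 \<le> w" if "even w = even b" using \<open>b < w\<close> that by presburger
        ultimately show "d \<in> {1, 2}" "b \<le> w - d" "even (w - d) = even b"
          unfolding d_def by auto
      qed
      have "w - d \<in> S" using d less.prems sub b by (intro parity) auto
      then have "?R\<^sup>*\<^sup>* b (w - d)" using d b by (intro less.IH) auto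
      then show ?thesis using step[OF less.prems(1) d(1,2) \<open>w - d \<in> S\<close>]
        by (rule rtranclp.rtrancl_into_rtrancl)
    qed simp
  qed
  show ?thesis
  proof (cases "b \<le> v")
    case False
    then have "v = 1" "b = 2" using v sub b by auto
    then have "?R b v" using G4_step(1)[OF n5, of 1 1] n5 v b_in by (simp add: numeral_2_eq_2)
    then show ?thesis by blast
  qed (use above v in blast)
qed

lemma G4_connected_if_contains_parity_class:
  fixes b :: nat
  assumes "n \<ge> 5" and "b \<in> {1, 2}" and "S \<subseteq> {1..n}"
    and "\<And>j. j \<in> {1..n} \<Longrightarrow> even j = even b \<Longrightarrow> j \<in> S"
  shows "induces_connected (G4 n) S"
  using G4_symmetric[OF assms(1)] G4_parity_class_reaches[OF assms]
  by (rule induces_connected_from_root)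

lemma sum_upto_double_split:
  fixes F :: "nat \<Rightarrow> 'a::comm_monoid_add"
  shows "(\<Sum>j=1..2*q. F j) = (\<Sum>t=1..q. F (2*t - 1)) + (\<Sum>t=1..q. F (2*t))"
proof (induction q)
  case (Suc q)
  have "(\<Sum>j=1..2 * Suc q. F j) = (\<Sum>j=1..2*q. F j) + (F (2 * Suc q - 1) + F (2 * Suc q))"
    by (simp add: add.assoc)
  also have "\<dots> = (\<Sum>t=1..q. F (2*t - 1)) + (\<Sum>t=1..q. F (2*t)) + (F (2 * Suc q - 1) + F (2 * Suc q))"
    by (simp only: Suc.IH)
  also have "\<dots> = (\<Sum>t=1..Suc q. F (2*t - 1)) + (\<Sum>t=1..Suc q. F (2*t))"
    by (simp add: ac_simps)
  finally show ?case .
qed simp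

lemma sum_odd_even_split:
  fixes F :: "nat \<Rightarrow> 'a::comm_monoid_add"
  shows "(\<Sum>j=1..n. F j) = (\<Sum>t=1..(n+1) div 2. F (2*t - 1)) + (\<Sum>t=1..n div 2. F (2*t))"
proof (cases "even n")
  case True
  then obtain q where q: "n = 2*q" by blast
  then have "(n+1) div 2 = q" "n div 2 = q" by auto
  then show ?thesis unfolding q by (simp only: sum_upto_double_split)
next
  case False
  then obtain q where q: "n = 2*q + 1" by (blast elim: oddE)
  then have "(n+1) div 2 = Suc q" "n div 2 = q" by auto
  moreover have "(\<Sum>j=1..n. F j) = (\<Sum>j=1..2*q. F j) + F (2 * Suc q - 1)" by (simp add: q)
  ultimately show ?thesis by (simp only: sum_upto_double_split) (simp add: ac_simps)
qed

definition odd_part :: "nat \<Rightarrow> (nat \<Rightarrow> real) \<Rightarrow> nat \<Rightarrow> real" where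
  "odd_part n x t = (if t \<in> {1..(n+1) div 2} then x (2*t - 1) else 0)"

definition even_part :: "nat \<Rightarrow> (nat \<Rightarrow> real) \<Rightarrow> nat \<Rightarrow> real" where
  "even_part n x t = (if t \<in> {1..n div 2} then x (2*t) else 0)"

lemma odd_part_at:
  assumes "j \<in> {1..n}" and "odd j"
  shows "odd_part n x ((j+1) div 2) = x j"
  using assms by (auto simp: odd_part_def elim!: oddE)

lemma even_part_at:
  assumes "j \<in> {1..n}" and "even j"
  shows "even_part n x (j div 2) = x j"
  using assms by (auto simp: even_part_def elim!: evenE)

lemma odd_even_parts_determine:
  assumes "\<And>j. j \<notin> {1..n} \<Longrightarrow> x j = 0" and "\<And>j. j \<notin> {1..n} \<Longrightarrow> y j = 0"
    and odd: "odd_part n x = odd_part n y" and even: "even_part n x = even_part n y"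
  shows "x = y"
proof
  fix j
  show "x j = y j"
  proof (cases "j \<in> {1..n}")
    case True
    then show ?thesis
      using odd even odd_part_at[OF True] even_part_at[OF True] by metis
  qed (use assms(1,2) in simp)
qed

lemma sparse_vec_reindex:
  assumes inj: "inj_on f {1..N}" and range: "\<And>t. t \<in> {1..N} \<Longrightarrow> f t \<in> {1..n}"
    and sparse: "sparse_vec k n x"
  shows "sparse_vec k N (\<lambda>t. if t \<in> {1..N} then x (f t) else 0)"
proof -
  let ?support = "{t\<in>{1..N}. (if t \<in> {1..N} then x (f t) else 0) \<noteq> 0}"
  have "card ?support \<le> card {j\<in>{1..n}. x j \<noteq> 0}"
  proof (rule card_inj_on_le)
    show "inj_on f ?support" using inj by (rule inj_on_subset) auto
  qed (use range in auto)
  then show ?thesis using sparse unfolding sparse_vec_def by auto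
qed

lemma sparse_odd_part: "sparse_vec k n x \<Longrightarrow> sparse_vec k ((n+1) div 2) (odd_part n x)"
  unfolding odd_part_def by (rule sparse_vec_reindex) (auto simp: inj_on_def)

lemma sparse_even_part: "sparse_vec k n x \<Longrightarrow> sparse_vec k (n div 2) (even_part n x)"
  unfolding even_part_def by (rule sparse_vec_reindex) (auto simp: inj_on_def)

definition interleave ::
  "nat \<Rightarrow> (nat \<Rightarrow> nat \<Rightarrow> real) \<Rightarrow> nat \<Rightarrow> (nat \<Rightarrow> nat \<Rightarrow> real) \<Rightarrow> nat \<Rightarrow> nat \<Rightarrow> real" where
  "interleave m1 B1 m2 B2 i j =
     (if i < m1 then (if odd j then B1 i ((j+1) div 2) else 1)
      else if i < m1 + m2 then (if even j then B2 (i - m1) (j div 2) else 1)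
      else if i = m1 + m2 then (if even j then 1 else 0)
      else (if odd j then 1 else 0))"

lemma interleave_odd_column:
  assumes "t \<ge> 1"
  shows "interleave m1 B1 m2 B2 i (2*t - 1) =
           (if i < m1 then B1 i t else if i = m1 + m2 then 0 else 1)"
proof -
  have "odd (2*t - 1)" "(2*t - 1 + 1) div 2 = t" using assms by auto
  then show ?thesis unfolding interleave_def by simp
qed

lemma interleave_even_column:
  "interleave m1 B1 m2 B2 i (2*t) =
     (if i < m1 then 1 else if i < m1 + m2 then B2 (i - m1) t else if i = m1 + m2 then 1 else 0)"
  unfolding interleave_def by simp

lemma mat_vec_odd_even_split:
  "mat_vec n A x i =
     (\<Sum>t=1..(n+1) div 2. A i (2*t - 1) * odd_part n x t) + (\<Sum>t=1..n div 2. A i (2*t) * even_part n x t)"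
proof -
  have "mat_vec n A x i =
     (\<Sum>t=1..(n+1) div 2. A i (2*t - 1) * x (2*t - 1)) + (\<Sum>t=1..n div 2. A i (2*t) * x (2*t))"
    unfolding mat_vec_def by (rule sum_odd_even_split)
  also have "\<dots> = (\<Sum>t=1..(n+1) div 2. A i (2*t - 1) * odd_part n x t) + (\<Sum>t=1..n div 2. A i (2*t) * even_part n x t)"
    by (intro arg_cong2[where f = "(+)"] sum.cong) (auto simp: odd_part_def even_part_def)
  finally show ?thesis .
qed

lemma mat_vec_interleave:
  fixes x :: "nat \<Rightarrow> real"
  shows "i < m1 \<Longrightarrow> mat_vec n (interleave m1 B1 m2 B2) x i =
           mat_vec ((n+1) div 2) B1 (odd_part n x) i + (\<Sum>t=1..n div 2. even_part n x t)"
    and "m1 \<le> i \<Longrightarrow> i < m1 + m2 \<Longrightarrow> mat_vec n (interleave m1 B1 m2 B2) x i =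
           mat_vec (n div 2) B2 (even_part n x) (i - m1) + (\<Sum>t=1..(n+1) div 2. odd_part n x t)"
    and "mat_vec n (interleave m1 B1 m2 B2) x (m1 + m2) = (\<Sum>t=1..n div 2. even_part n x t)"
    and "mat_vec n (interleave m1 B1 m2 B2) x (m1 + m2 + 1) = (\<Sum>t=1..(n+1) div 2. odd_part n x t)"
proof -
  have odd_cols: "(\<Sum>t=1..(n+1) div 2. interleave m1 B1 m2 B2 j (2*t - 1) * odd_part n x t) =
      (\<Sum>t=1..(n+1) div 2. (if j < m1 then B1 j t else if j = m1 + m2 then 0 else 1) * odd_part n x t)"
    for j by (intro sum.cong refl arg_cong2[where f = "(*)"] interleave_odd_column) auto
  have even_cols: "(\<Sum>t=1..n div 2. interleave m1 B1 m2 B2 j (2*t) * even_part n x t) =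
      (\<Sum>t=1..n div 2. (if j < m1 then 1 else if j < m1 + m2 then B2 (j - m1) t
                          else if j = m1 + m2 then 1 else 0) * even_part n x t)"
    for j by (simp add: interleave_even_column)
  note rows = mat_vec_odd_even_split[of n "interleave m1 B1 m2 B2"] odd_cols even_cols
  show "i < m1 \<Longrightarrow> mat_vec n (interleave m1 B1 m2 B2) x i =
      mat_vec ((n+1) div 2) B1 (odd_part n x) i + (\<Sum>t=1..n div 2. even_part n x t)"
    unfolding rows by (simp add: mat_vec_def)
  show "m1 \<le> i \<Longrightarrow> i < m1 + m2 \<Longrightarrow> mat_vec n (interleave m1 B1 m2 B2) x i =
      mat_vec (n div 2) B2 (even_part n x) (i - m1) + (\<Sum>t=1..(n+1) div 2. odd_part n x t)"
    unfolding rows by (simp add: mat_vec_def)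
  show "mat_vec n (interleave m1 B1 m2 B2) x (m1 + m2) = (\<Sum>t=1..n div 2. even_part n x t)"
    unfolding rows by simp
  show "mat_vec n (interleave m1 B1 m2 B2) x (m1 + m2 + 1) = (\<Sum>t=1..(n+1) div 2. odd_part n x t)"
    unfolding rows by simp
qed

lemma identifiesD:
  assumes "identifies k m n A" and "sparse_vec k n x" and "sparse_vec k n y"
    and "\<And>i. i < m \<Longrightarrow> mat_vec n A x i = mat_vec n A y i"
  shows "x = y"
  using assms unfolding identifies_def by blast

(* If B1 and B2 identify k-sparse vectors, so does the combined matrix: equal
   measurements give equal odd and even sums, then equal B1- and B2-measurements of the
   odd and even parts, hence equal parts. *)
lemma interleave_identifies:
  assumes B1: "identifies k m1 ((n+1) div 2) B1" and B2: "identifies k m2 (n div 2) B2"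
  shows "identifies k (m1 + m2 + 2) n (interleave m1 B1 m2 B2)"
  unfolding identifies_def
proof (intro allI impI)
  let ?A = "interleave m1 B1 m2 B2"
  fix x y assume x: "sparse_vec k n x" and y: "sparse_vec k n y" and "x \<noteq> y"
  show "\<exists>i<m1 + m2 + 2. mat_vec n ?A x i \<noteq> mat_vec n ?A y i"
  proof (rule ccontr)
    assume "\<not> ?thesis"
    then have same: "\<And>i. i < m1 + m2 + 2 \<Longrightarrow> mat_vec n ?A x i = mat_vec n ?A y i" by blast
    have even_sums: "(\<Sum>t=1..n div 2. even_part n x t) = (\<Sum>t=1..n div 2. even_part n y t)"
      using same[of "m1 + m2"] by (simp add: mat_vec_interleave(3))
    have odd_sums: "(\<Sum>t=1..(n+1) div 2. odd_part n x t) = (\<Sum>t=1..(n+1) div 2. odd_part n y t)"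
      using same[of "m1 + m2 + 1"] unfolding mat_vec_interleave(4) by simp
    have odd_parts: "odd_part n x = odd_part n y"
    proof (rule identifiesD[OF B1 sparse_odd_part[OF x] sparse_odd_part[OF y]])
      fix i assume "i < m1"
      then show "mat_vec ((n+1) div 2) B1 (odd_part n x) i = mat_vec ((n+1) div 2) B1 (odd_part n y) i"
        using same[of i] even_sums unfolding mat_vec_interleave(1)[OF \<open>i < m1\<close>] by simp
    qed
    have even_parts: "even_part n x = even_part n y"
    proof (rule identifiesD[OF B2 sparse_even_part[OF x] sparse_even_part[OF y]])
      fix i assume "i < m2"
      then have row: "m1 \<le> m1 + i" "m1 + i < m1 + m2" by simp_all
      show "mat_vec (n div 2) B2 (even_part n x) i = mat_vec (n div 2) B2 (even_part n y) i"
        using same[of "m1 + i"] odd_sums row(2) unfolding mat_vec_interleave(2)[OF row] by simp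
    qed
    have vanish: "\<And>j. j \<notin> {1..n} \<Longrightarrow> x j = 0" "\<And>j. j \<notin> {1..n} \<Longrightarrow> y j = 0"
      using x y unfolding sparse_vec_def by blast+
    have "x = y" by (rule odd_even_parts_determine[OF vanish odd_parts even_parts])
    with \<open>x \<noteq> y\<close> show False ..
  qed
qed

lemma interleave_zero_one:
  assumes B1: "zero_one_matrix m1 ((n+1) div 2) B1" and B2: "zero_one_matrix m2 (n div 2) B2"
  shows "zero_one_matrix (m1 + m2 + 2) n (interleave m1 B1 m2 B2)"
  unfolding zero_one_matrix_def
proof (intro allI impI ballI)
  fix i j assume j: "j \<in> {1..n}"
  have "B1 i ((j+1) div 2) = 0 \<or> B1 i ((j+1) div 2) = 1" if "i < m1" "odd j"
  proof -
    have "(j+1) div 2 \<in> {1..(n+1) div 2}" using j \<open>odd j\<close> by (auto elim!: oddE)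
    then show ?thesis using B1 \<open>i < m1\<close> unfolding zero_one_matrix_def by blast
  qed
  moreover have "B2 (i - m1) (j div 2) = 0 \<or> B2 (i - m1) (j div 2) = 1"
    if "m1 \<le> i" "i < m1 + m2" "even j"
  proof -
    have "j div 2 \<in> {1..n div 2}" "i - m1 < m2" using j that by (auto elim!: evenE)
    then show ?thesis using B2 unfolding zero_one_matrix_def by blast
  qed
  ultimately show "interleave m1 B1 m2 B2 i j = 0 \<or> interleave m1 B1 m2 B2 i j = 1"
    unfolding interleave_def by auto
qed

lemma interleave_row_contains_parity_class:
  "\<exists>b::nat \<in> {1, 2}. \<forall>j. even j = even b \<longrightarrow> interleave m1 B1 m2 B2 i j = 1"
proof (cases "i < m1 \<or> i = m1 + m2")
  case True
  then have "\<forall>j. even j = even (2::nat) \<longrightarrow> interleave m1 B1 m2 B2 i j = 1"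
    unfolding interleave_def by auto
  then show ?thesis by blast
next
  case False
  then have "\<forall>j. even j = even (1::nat) \<longrightarrow> interleave m1 B1 m2 B2 i j = 1"
    unfolding interleave_def by auto
  then show ?thesis by blast
qed

lemma interleave_measurement_matrix:
  assumes "n \<ge> 5"
    and "zero_one_matrix m1 ((n+1) div 2) B1" and "zero_one_matrix m2 (n div 2) B2"
  shows "measurement_matrix (G4 n) (m1 + m2 + 2) n (interleave m1 B1 m2 B2)"
  unfolding measurement_matrix_def
proof (intro conjI allI impI)
  show "zero_one_matrix (m1 + m2 + 2) n (interleave m1 B1 m2 B2)"
    using assms(2,3) by (rule interleave_zero_one)
  fix i
  obtain b :: nat where "b \<in> {1, 2}" and ones: "\<forall>j. even j = even b \<longrightarrow> interleave m1 B1 m2 B2 i j = 1"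
    using interleave_row_contains_parity_class[of m1 B1 m2 B2 i] by blast
  show "induces_connected (G4 n) (row_support n (interleave m1 B1 m2 B2) i)"
  proof (rule G4_connected_if_contains_parity_class[OF assms(1) \<open>b \<in> {1, 2}\<close>])
    show "row_support n (interleave m1 B1 m2 B2) i \<subseteq> {1..n}"
      unfolding row_support_def by auto
    show "j \<in> row_support n (interleave m1 B1 m2 B2) i" if "j \<in> {1..n}" "even j = even b" for j
      using that ones unfolding row_support_def by auto
  qed
qed

(* The (shifted) identity matrix reads off every coordinate, so M_C is a minimum over a
   nonempty set. *)
lemma shift_identity_identifies:
  "zero_one_matrix N N (\<lambda>i j. if j = i + 1 then 1 else 0) \<and>
   identifies k N N (\<lambda>i j. if j = i + 1 then 1 else 0)"
proof
  let ?I = "\<lambda>i j. if j = i + 1 then 1 else 0 :: real"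
  show "zero_one_matrix N N ?I" unfolding zero_one_matrix_def by auto
  have reads: "mat_vec N ?I x i = x (i + 1)" if "i < N" for x i
  proof -
    have "mat_vec N ?I x i = (\<Sum>j\<in>{1..N}. if j = i + 1 then x j else 0)"
      unfolding mat_vec_def by (intro sum.cong) auto
    also have "\<dots> = x (i + 1)" using that by (subst sum.delta) auto
    finally show ?thesis .
  qed
  show "identifies k N N ?I" unfolding identifies_def
  proof (intro allI impI)
    fix x y assume x: "sparse_vec k N x" and y: "sparse_vec k N y" and "x \<noteq> y"
    then obtain j where j: "x j \<noteq> y j" by blast
    have "j \<in> {1..N}"
    proof (rule ccontr)
      assume "j \<notin> {1..N}"
      with x y have "x j = 0" "y j = 0" unfolding sparse_vec_def by blast+
      with j show False by simp
    qed
    then have "j - 1 < N" "mat_vec N ?I x (j - 1) = x j" "mat_vec N ?I y (j - 1) = y j"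
      using reads[of "j - 1"] by auto
    with j show "\<exists>i<N. mat_vec N ?I x i \<noteq> mat_vec N ?I y i" by metis
  qed
qed

lemma M_C_attained:
  "\<exists>A. zero_one_matrix (M_C k N) N A \<and> identifies k (M_C k N) N A"
  unfolding M_C_def by (rule LeastI_ex) (use shift_identity_identifies in blast)

lemma M_graph_le:
  assumes "measurement_matrix E m n A" and "identifies k m n A"
  shows "M_graph E k n \<le> m"
  unfolding M_graph_def using assms by (intro Least_le) blast

theorem theorem2:
  fixes n k :: nat
  assumes "n \<ge> 5" and "k \<ge> 1"
  shows "M_graph (G4 n) k n \<le> M_C k (n div 2) + M_C k ((n + 1) div 2) + 2"
proof -
  obtain B1 where B1: "zero_one_matrix (M_C k ((n+1) div 2)) ((n+1) div 2) B1"
      "identifies k (M_C k ((n+1) div 2)) ((n+1) div 2) B1"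
    using M_C_attained by blast
  obtain B2 where B2: "zero_one_matrix (M_C k (n div 2)) (n div 2) B2"
      "identifies k (M_C k (n div 2)) (n div 2) B2"
    using M_C_attained by blast
  let ?A = "interleave (M_C k ((n+1) div 2)) B1 (M_C k (n div 2)) B2"
  have "measurement_matrix (G4 n) (M_C k ((n+1) div 2) + M_C k (n div 2) + 2) n ?A"
    using assms(1) B1(1) B2(1) by (rule interleave_measurement_matrix)
  moreover have "identifies k (M_C k ((n+1) div 2) + M_C k (n div 2) + 2) n ?A"
    using B1(2) B2(2) by (rule interleave_identifies)
  ultimately have "M_graph (G4 n) k n \<le> M_C k ((n+1) div 2) + M_C k (n div 2) + 2"
    by (rule M_graph_le)
  then show ?thesis by simp
qed

end
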